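(* Let $\mathbf{T}\in\{0,1\}^{n\times\ell}$ be a matrix with $\delta(\mathbf{T})\le 3$ and $|\mathcal{T}_3|\ge 5$. Then there exist $j_1\ne j_2\in[\ell]$ such that: $T_1\subseteq\{j_1,j_2\}$ for each $T_1\in\mathcal{T}_1$; $T_2\cap\{j_1,j_2\}\ne\emptyset$ for each $T_2\in\mathcal{T}_2$; and $\{j_1,j_2\}\subseteq T_3$ for each $T_3\in\mathcal{T}_3$. Moreover, with $\mathcal{T}_2'=\{T_2\in\mathcal{T}_2: j_1\in T_2,\ j_2\notin T_2\}$ and $\mathcal{T}_2''=\{T_2\in\mathcal{T}_2: j_1\notin T_2,\ j_2\in T_2\}$, exactly one of the following holds: (a) $\mathcal{T}_2'=\emptyset$ or $\mathcal{T}_2''=\emptyset$; (b) there is $j_3\in[\ell]$ with $\mathcal{T}_2'=\{\{j_1,j_3\}\}$ and $\mathcal{T}_2''=\{\{j_2,j_3\}\}$.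
   Context: For rows $u,w\in\{0,1\}^\ell$, $D(u,w)=\{j:u[j]\ne w[j]\}$ and $d(u,w)=|D(u,w)|$; $\delta(\mathbf{T})=\max_{i\ne i'}d(\mathbf{T}[i],\mathbf{T}[i'])$, where $\mathbf{T}[i]$ is the $i$-th row. For $x\in\mathbb{N}$, $\mathcal{T}_x$ is the set system (without duplicates) $\{D(\mathbf{T}[i],\mathbf{T}[n]): i\in[n-1],\ d(\mathbf{T}[i],\mathbf{T}[n])=x\}$. *)

theory Defs
  imports Main
begin

text \<open>A binary n x l matrix is modelled as T :: nat => nat => bool, with rows
  indexed by 1..n and columns by 1..l (True = 1, False = 0). Row i is T i.\<close>

definition Dset :: "nat \<Rightarrow> (nat \<Rightarrow> bool) \<Rightarrow> (nat \<Rightarrow> bool) \<Rightarrow> nat set" where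
  "Dset l u w = {j \<in> {1..l}. u j \<noteq> w j}"

definition dist01 :: "nat \<Rightarrow> (nat \<Rightarrow> bool) \<Rightarrow> (nat \<Rightarrow> bool) \<Rightarrow> nat" where
  "dist01 l u w = card (Dset l u w)"

definition delta :: "nat \<Rightarrow> nat \<Rightarrow> (nat \<Rightarrow> nat \<Rightarrow> bool) \<Rightarrow> nat" where
  "delta n l T = Max ({0} \<union> {dist01 l (T i) (T i') | i i'.
      i \<in> {1..n} \<and> i' \<in> {1..n} \<and> i \<noteq> i'})"

definition calT :: "nat \<Rightarrow> nat \<Rightarrow> (nat \<Rightarrow> nat \<Rightarrow> bool) \<Rightarrow> nat \<Rightarrow> nat set set" where
  "calT n l T x = {Dset l (T i) (T n) | i. i \<in> {1..n-1} \<and> dist01 l (T i) (T n) = x}"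

end

(* Each row i < n gives the set D(T[i], T[n]) of columns where it differs from the last row, and
   D(T[i], T[n]) and D(T[i'], T[n]) have symmetric difference D(T[i], T[i']).  So delta(T) <= 3
   makes any two of these sets of sizes a, b with a + b > 3 intersect, and two distinct 3-sets
   share exactly two columns.  Five 3-sets pairwise sharing two columns all contain a common
   pair {j1, j2}, for otherwise they all lie in a 4-set.  A 1- or 2-set avoiding {j1, j2}
   would meet every 3-set {j1, j2, c} in c, allowing at most two 3-sets.  Finally a 2-set
   through j1 but not j2 and one through j2 but not j1 must share a third column j3, and
   this j3 pins down both families. *)

theory Submission
  imports Defs
begin

lemma card_sym_diff_add_card_Int:
  assumes "finite A" "finite B"
  shows "card (sym_diff A B) + 2 * card (A \<inter> B) = card A + card B"
proof -
  have "card (sym_diff A B) = card (A - B) + card (B - A)"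
    by (rule card_Un_disjoint) (use assms in auto)
  moreover have "card A = card (A \<inter> B) + card (A - B)" "card B = card (A \<inter> B) + card (B - A)"
    using assms card_Int_Diff[of A B] card_Int_Diff[of B A] by (auto simp: Int_commute)
  ultimately show ?thesis by simp
qed

lemma Int_nonempty_if_card_sym_diff_less:
  assumes "finite A" "finite B" "card (sym_diff A B) < card A + card B"
  shows "A \<inter> B \<noteq> {}"
  using card_sym_diff_add_card_Int[OF assms(1,2)] assms(3) by auto

lemma card_Int_eq_2_if_card_sym_diff_le_3:
  assumes "card A = 3" "card B = 3" "A \<noteq> B" "card (sym_diff A B) \<le> 3"
  shows "card (A \<inter> B) = 2"
proof -
  have fin: "finite A" "finite B" using assms(1,2) card_ge_0_finite by force+
  have "card (A \<inter> B) \<noteq> 3"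
    using card_subset_eq[OF fin(1), of "A \<inter> B"] card_subset_eq[OF fin(2), of "A \<inter> B"] assms(1-3)
    by auto
  moreover have "card (A \<inter> B) \<le> 3" using card_mono[OF fin(1), of "A \<inter> B"] assms(1) by auto
  ultimately show ?thesis using card_sym_diff_add_card_Int[OF fin] assms by linarith
qed

lemma subset_Un_if_not_supset_Int:
  assumes card: "card A = 3" "card B = 3" "card C = 3"
    and meet: "card (A \<inter> B) = 2" "card (A \<inter> C) = 2" "card (B \<inter> C) = 2"
    and "\<not> A \<inter> B \<subseteq> C"
  shows "C \<subseteq> A \<union> B"
proof
  fix x assume "x \<in> C"
  have finC: "finite C" using card(3) card_ge_0_finite by force
  show "x \<in> A \<union> B"
  proof (rule ccontr)
    assume "x \<notin> A \<union> B"
    then have "A \<inter> C \<subseteq> C - {x}" "B \<inter> C \<subseteq> C - {x}" by auto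
    moreover have "card (C - {x}) = 2" using \<open>x \<in> C\<close> card(3) finC by simp
    ultimately have "A \<inter> C = C - {x}" "B \<inter> C = C - {x}"
      using card_subset_eq[of "C - {x}"] finC meet by auto
    then have "C - {x} \<subseteq> A \<inter> B" by blast
    then have "A \<inter> B = C - {x}"
      using card_subset_eq[of "A \<inter> B" "C - {x}"] \<open>card (C - {x}) = 2\<close> meet(1)
      by (metis card_ge_0_finite zero_less_numeral)
    with \<open>\<not> A \<inter> B \<subseteq> C\<close> show False by blast
  qed
qed

lemma subset_Un_if_Int_not_common:
  assumes card3: "\<And>C. C \<in> \<A> \<Longrightarrow> card C = 3"
    and meet: "\<And>C D. C \<in> \<A> \<Longrightarrow> D \<in> \<A> \<Longrightarrow> C \<noteq> D \<Longrightarrow> card (C \<inter> D) = 2"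
    and AB: "A \<in> \<A>" "B \<in> \<A>" "A \<noteq> B"
    and C0: "C0 \<in> \<A>" "\<not> A \<inter> B \<subseteq> C0"
    and D: "D \<in> \<A>"
  shows "D \<subseteq> A \<union> B"
proof -
  have in_Un: "D' \<subseteq> A \<union> B" if D': "D' \<in> \<A>" "\<not> A \<inter> B \<subseteq> D'" for D'
  proof -
    from D'(2) have "A \<noteq> D'" "B \<noteq> D'" by auto
    with subset_Un_if_not_supset_Int[OF card3[OF AB(1)] card3[OF AB(2)] card3[OF D'(1)]
        meet[OF AB] meet[OF AB(1) D'(1)] meet[OF AB(2) D'(1)] D'(2)]
    show ?thesis by blast
  qed
  show ?thesis
  proof (cases "A \<inter> B \<subseteq> D")
    case True
    show ?thesis
    proof
      fix d assume "d \<in> D"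
      have finD: "finite D" using card3[OF D] card_ge_0_finite by force
      show "d \<in> A \<union> B"
      proof (rule ccontr)
        assume "d \<notin> A \<union> B"
        then have "D \<inter> C0 \<subseteq> D - {d}" using in_Un[OF C0] by blast
        moreover have "card (D \<inter> C0) = 2" using meet[OF D C0(1)] True C0(2) by auto
        moreover have "card (D - {d}) = 2" using \<open>d \<in> D\<close> finD card3[OF D] by simp
        ultimately have "D \<inter> C0 = D - {d}" using card_subset_eq[of "D - {d}" "D \<inter> C0"] finD by simp
        then have "A \<inter> B \<subseteq> C0" using True \<open>d \<notin> A \<union> B\<close> by auto
        with C0(2) show False by contradiction
      qed
    qed
  next
    case False
    then show ?thesis by (rule in_Un[OF D])
  qed
qed

lemma common_pair_if_pairwise_Int_card_2:
  assumes card3: "\<And>C. C \<in> \<A> \<Longrightarrow> card C = 3"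
    and meet: "\<And>C D. C \<in> \<A> \<Longrightarrow> D \<in> \<A> \<Longrightarrow> C \<noteq> D \<Longrightarrow> card (C \<inter> D) = 2"
    and many: "4 < card \<A>"
  shows "\<exists>P. card P = 2 \<and> (\<forall>C\<in>\<A>. P \<subseteq> C)"
proof -
  from many have "finite \<A>" "\<not> card \<A> \<le> Suc 0" by (auto intro: card_ge_0_finite)
  then obtain A B where AB: "A \<in> \<A>" "B \<in> \<A>" "A \<noteq> B"
    by (auto simp: card_le_Suc0_iff_eq)
  have fin: "finite A" "finite B" using AB card3 card_ge_0_finite by force+
  show ?thesis
  proof (intro exI conjI ballI)
    show "card (A \<inter> B) = 2" using meet AB by blast
    fix C0 assume "C0 \<in> \<A>"
    show "A \<inter> B \<subseteq> C0"
    proof (rule ccontr)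
      assume "\<not> A \<inter> B \<subseteq> C0"
      then have "\<A> \<subseteq> {X. X \<subseteq> A \<union> B \<and> card X = 3}"
        using subset_Un_if_Int_not_common[OF card3 meet AB \<open>C0 \<in> \<A>\<close>] card3 by blast
      then have "card \<A> \<le> card {X. X \<subseteq> A \<union> B \<and> card X = 3}"
        by (rule card_mono[rotated]) (simp add: fin)
      also have "\<dots> = 4"
      proof -
        have "card (A \<union> B) = 4"
          using card_Un_Int[OF fin] card3[OF AB(1)] card3[OF AB(2)] meet[OF AB] by simp
        then show ?thesis using n_subsets[of "A \<union> B" 3] fin by (simp add: numeral_eq_Suc)
      qed
      finally show False using many by simp
    qed
  qed
qed

lemma Int_nonempty_if_meets_all_extensions:
  assumes "finite P" "finite S" "card S < card \<A>"
    and ext: "\<And>C. C \<in> \<A> \<Longrightarrow> P \<subseteq> C \<and> card C = Suc (card P)"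
    and meets: "\<And>C. C \<in> \<A> \<Longrightarrow> S \<inter> C \<noteq> {}"
  shows "S \<inter> P \<noteq> {}"
proof
  assume disj: "S \<inter> P = {}"
  have "\<A> \<subseteq> (\<lambda>c. insert c P) ` S"
  proof
    fix C assume C: "C \<in> \<A>"
    then obtain c where c: "c \<in> S" "c \<in> C" using meets by blast
    have "finite C" using ext[OF C] card_ge_0_finite by force
    moreover have "insert c P \<subseteq> C" using c ext[OF C] by blast
    moreover have "c \<notin> P" using c disj by blast
    then have "card (insert c P) = card C" using ext[OF C] \<open>finite P\<close> by simp
    ultimately have "C = insert c P" by (metis card_subset_eq)
    with c show "C \<in> (\<lambda>c. insert c P) ` S" by blast
  qed
  then have "card \<A> \<le> card ((\<lambda>c. insert c P) ` S)" using \<open>finite S\<close> by (intro card_mono) auto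
  also have "\<dots> \<le> card S" using \<open>finite S\<close> by (rule card_image_le)
  finally show False using \<open>card S < card \<A>\<close> by simp
qed

lemma doubletons_if_meet:
  assumes "card S = 2" "card S' = 2" "j1 \<in> S" "j2 \<notin> S" "j1 \<notin> S'" "j2 \<in> S'" "S \<inter> S' \<noteq> {}"
  shows "\<exists>z. S = {j1, z} \<and> S' = {j2, z}"
proof -
  obtain z where "z \<in> S" "z \<in> S'" using assms(7) by blast
  with assms(1-6) show ?thesis by (auto simp: card_2_iff)
qed

lemma cross_meeting_doubletons_dichotomy:
  assumes card2: "\<And>S. S \<in> \<S> \<Longrightarrow> card S = 2"
    and range: "\<And>S. S \<in> \<S> \<Longrightarrow> S \<subseteq> L"
    and meet: "\<And>S S'. S \<in> \<S> \<Longrightarrow> S' \<in> \<S> \<Longrightarrow> j1 \<in> S \<Longrightarrow> j2 \<notin> S \<Longrightarrow> j1 \<notin> S' \<Longrightarrow> j2 \<in> S'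
      \<Longrightarrow> S \<inter> S' \<noteq> {}"
  shows "let X = {S \<in> \<S>. j1 \<in> S \<and> j2 \<notin> S}; Y = {S \<in> \<S>. j1 \<notin> S \<and> j2 \<in> S}
    in (X = {} \<or> Y = {}) \<noteq> (\<exists>j3 \<in> L. X = {{j1, j3}} \<and> Y = {{j2, j3}})"
proof -
  define X where "X = {S \<in> \<S>. j1 \<in> S \<and> j2 \<notin> S}"
  define Y where "Y = {S \<in> \<S>. j1 \<notin> S \<and> j2 \<in> S}"
  have pair: "\<exists>z. S = {j1, z} \<and> S' = {j2, z}" if "S \<in> X" "S' \<in> Y" for S S'
  proof (rule doubletons_if_meet)
    show "card S = 2" "card S' = 2" "j1 \<in> S" "j2 \<notin> S" "j1 \<notin> S'" "j2 \<in> S'"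
      using that card2 unfolding X_def Y_def by auto
    show "S \<inter> S' \<noteq> {}" using that meet[of S S'] unfolding X_def Y_def by blast
  qed
  have "\<exists>j3 \<in> L. X = {{j1, j3}} \<and> Y = {{j2, j3}}" if S0: "S0 \<in> X" and S0': "S0' \<in> Y" for S0 S0'
  proof -
    obtain z where z: "S0 = {j1, z}" "S0' = {j2, z}" using pair[OF S0 S0'] by blast
    have "j1 \<noteq> j2" using S0 unfolding X_def by auto
    have "X = {{j1, z}}"
    proof (intro equalityI subsetI)
      fix S assume S: "S \<in> X"
      from pair[OF S S0'] z \<open>j1 \<noteq> j2\<close> show "S \<in> {{j1, z}}" by (auto simp: doubleton_eq_iff)
    qed (use S0 z in simp)
    moreover have "Y = {{j2, z}}"
    proof (intro equalityI subsetI)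
      fix S assume S: "S \<in> Y"
      from pair[OF S0 S] z \<open>j1 \<noteq> j2\<close> show "S \<in> {{j2, z}}" by (auto simp: doubleton_eq_iff)
    qed (use S0' z in simp)
    moreover have "z \<in> L" using S0 z range unfolding X_def by auto
    ultimately show ?thesis by blast
  qed
  moreover have "X \<noteq> {} \<and> Y \<noteq> {}" if "\<exists>j3 \<in> L. X = {{j1, j3}} \<and> Y = {{j2, j3}}"
    using that by auto
  ultimately show ?thesis unfolding Let_def X_def[symmetric] Y_def[symmetric] by blast
qed

lemma Dset_sym_diff: "sym_diff (Dset l u w) (Dset l v w) = Dset l u v"
  unfolding Dset_def by auto

lemma calT_card: "S \<in> calT n l T x \<Longrightarrow> card S = x"
  unfolding calT_def dist01_def by auto

lemma calT_subset: "S \<in> calT n l T x \<Longrightarrow> S \<subseteq> {1..l}"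
  unfolding calT_def Dset_def by auto

lemma calT_finite: "S \<in> calT n l T x \<Longrightarrow> finite S"
  using finite_subset[OF calT_subset] by blast

lemma dist01_le_delta:
  assumes "i \<in> {1..n}" "i' \<in> {1..n}" "i \<noteq> i'"
  shows "dist01 l (T i) (T i') \<le> delta n l T"
proof -
  have "{dist01 l (T i) (T i') | i i'. i \<in> {1..n} \<and> i' \<in> {1..n} \<and> i \<noteq> i'}
      \<subseteq> (\<lambda>(i, i'). dist01 l (T i) (T i')) ` ({1..n} \<times> {1..n})" by auto
  then have "finite {dist01 l (T i) (T i') | i i'. i \<in> {1..n} \<and> i' \<in> {1..n} \<and> i \<noteq> i'}"
    by (rule finite_subset) auto
  then show ?thesis unfolding delta_def using assms by (intro Max_ge) auto
qed

lemma calT_card_sym_diff_le_delta: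
  assumes "S \<in> calT n l T a" "S' \<in> calT n l T b" "S \<noteq> S'"
  shows "card (sym_diff S S') \<le> delta n l T"
proof -
  obtain i i' where "i \<in> {1..n-1}" "i' \<in> {1..n-1}"
    and S: "S = Dset l (T i) (T n)" and S': "S' = Dset l (T i') (T n)"
    using assms(1,2) unfolding calT_def by blast
  moreover have "i \<noteq> i'" using assms(3) S S' by blast
  ultimately show ?thesis
    using dist01_le_delta[of i n i' l T] unfolding S S' Dset_sym_diff dist01_def by auto
qed

lemma calT_Int_nonempty:
  assumes "delta n l T \<le> 3" "S \<in> calT n l T a" "S' \<in> calT n l T b" "S \<noteq> S'" "3 < a + b"
  shows "S \<inter> S' \<noteq> {}"
proof (rule Int_nonempty_if_card_sym_diff_less)
  show "finite S" "finite S'" using calT_finite[OF assms(2)] calT_finite[OF assms(3)] .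
  show "card (sym_diff S S') < card S + card S'"
    using calT_card_sym_diff_le_delta[OF assms(2-4)] calT_card[OF assms(2)] calT_card[OF assms(3)]
      assms(1,5) by simp
qed

lemma calT_3_common_pair:
  assumes "delta n l T \<le> 3" "card (calT n l T 3) \<ge> 5"
  obtains j1 j2 where "j1 \<in> {1..l}" "j2 \<in> {1..l}" "j1 \<noteq> j2" "\<forall>C \<in> calT n l T 3. {j1, j2} \<subseteq> C"
proof -
  let ?T3 = "calT n l T 3"
  have card3: "card C = 3" if "C \<in> ?T3" for C
    using calT_card[OF that] .
  have meet: "card (C \<inter> D) = 2" if "C \<in> ?T3" "D \<in> ?T3" "C \<noteq> D" for C D
    using card_Int_eq_2_if_card_sym_diff_le_3[OF card3[OF that(1)] card3[OF that(2)] that(3)]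
      calT_card_sym_diff_le_delta[OF that] assms(1) by linarith
  have "4 < card ?T3" using assms(2) by simp
  with common_pair_if_pairwise_Int_card_2[OF card3 meet]
  obtain P where P: "card P = 2" "\<forall>C \<in> ?T3. P \<subseteq> C" by blast
  then obtain j1 j2 where j12: "P = {j1, j2}" "j1 \<noteq> j2" by (auto simp: card_2_iff)
  have "?T3 \<noteq> {}" using assms(2) by auto
  then obtain C where "C \<in> ?T3" by blast
  then have "P \<subseteq> {1..l}" using P(2) calT_subset[of C n l T 3] by blast
  then show thesis using that[of j1 j2] j12 P(2) by simp
qed

lemma calT_meets_common_pair:
  assumes "delta n l T \<le> 3" "card (calT n l T 3) \<ge> 5"
    and core: "j1 \<noteq> j2" "\<forall>C \<in> calT n l T 3. {j1, j2} \<subseteq> C"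
    and S: "S \<in> calT n l T k" and k: "k = 1 \<or> k = 2"
  shows "S \<inter> {j1, j2} \<noteq> {}"
proof (rule Int_nonempty_if_meets_all_extensions[of "{j1, j2}" S "calT n l T 3"])
  show "finite {j1, j2}" "finite S" using calT_finite[OF S] by auto
  show "card S < card (calT n l T 3)" using calT_card[OF S] k assms(2) by auto
  show "{j1, j2} \<subseteq> C \<and> card C = Suc (card {j1, j2})" if "C \<in> calT n l T 3" for C
    using core calT_card[OF that] that by simp
  show "S \<inter> C \<noteq> {}" if C: "C \<in> calT n l T 3" for C
  proof -
    have "S \<noteq> C" using calT_card[OF S] calT_card[OF C] k by auto
    then show ?thesis using calT_Int_nonempty[OF assms(1) S C] k by auto
  qed
qed

theorem lemma16:
  fixes n l :: nat and T :: "nat \<Rightarrow> nat \<Rightarrow> bool"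
  assumes "delta n l T \<le> 3"
    and "card (calT n l T 3) \<ge> 5"
  shows "\<exists>j1 j2. j1 \<in> {1..l} \<and> j2 \<in> {1..l} \<and> j1 \<noteq> j2
     \<and> (\<forall>S \<in> calT n l T 1. S \<subseteq> {j1, j2})
     \<and> (\<forall>S \<in> calT n l T 2. S \<inter> {j1, j2} \<noteq> {})
     \<and> (\<forall>S \<in> calT n l T 3. {j1, j2} \<subseteq> S)
     \<and> (let T2' = {S \<in> calT n l T 2. j1 \<in> S \<and> j2 \<notin> S};
            T2'' = {S \<in> calT n l T 2. j1 \<notin> S \<and> j2 \<in> S}
        in ((T2' = {} \<or> T2'' = {}) \<noteq>
            (\<exists>j3 \<in> {1..l}. T2' = {{j1, j3}} \<and> T2'' = {{j2, j3}})))"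
proof -
  obtain j1 j2 where range: "j1 \<in> {1..l}" "j2 \<in> {1..l}" and core: "j1 \<noteq> j2"
    and sup3: "\<forall>C \<in> calT n l T 3. {j1, j2} \<subseteq> C"
    using calT_3_common_pair[OF assms] by blast
  note meets_core = calT_meets_common_pair[OF assms core sup3]
  have sub1: "S \<subseteq> {j1, j2}" if "S \<in> calT n l T 1" for S
    using meets_core[OF that] calT_card[OF that] by (auto simp: card_1_singleton_iff)
  have meet2: "S \<inter> {j1, j2} \<noteq> {}" if "S \<in> calT n l T 2" for S
    using meets_core[OF that] by simp
  have "let T2' = {S \<in> calT n l T 2. j1 \<in> S \<and> j2 \<notin> S};
      T2'' = {S \<in> calT n l T 2. j1 \<notin> S \<and> j2 \<in> S}
    in (T2' = {} \<or> T2'' = {}) \<noteq> (\<exists>j3 \<in> {1..l}. T2' = {{j1, j3}} \<and> T2'' = {{j2, j3}})"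
  proof (rule cross_meeting_doubletons_dichotomy)
    fix S S' assume "S \<in> calT n l T 2" "S' \<in> calT n l T 2" "j1 \<in> S" "j2 \<notin> S" "j1 \<notin> S'" "j2 \<in> S'"
    then show "S \<inter> S' \<noteq> {}" using calT_Int_nonempty[OF assms(1), of S 2 S' 2] by auto
  qed (use calT_card calT_subset in auto)
  with range core sub1 meet2 sup3 show ?thesis by blast
qed

end
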